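(* Let $n>2$ and $q>0$ be integers such that $n$ is even or $q$ is odd, and let $p>\max\{n,(q-1)n+1\}$ be a prime. Then $$ \sum_{k=0}^{p-q}\frac{(q-\frac{p}{n})_k^n}{(1)_k^n}\left(\sum_{i=0}^{k-1}\frac{1}{q+i-\frac{p}{n}}-H_k^{(1)}\right)\equiv0\pmod{p^2} $$ and $$ \sum_{k=0}^{p-q}\frac{(q-\frac{p}{n})_k^n}{(1)_k^n}\left(\sum_{i=0}^{k-1}\frac{1}{q+i-\frac{p}{n}}-H_k^{(1)}\right)^2\equiv0\pmod{p}. $$
   Context: $(x)_k$ denotes the Pochhammer symbol: $(x)_0=1$ and $(x)_k=x(x+1)\cdots(x+k-1)$ for $k>0$. $H_k^{(1)}=\sum_{j=1}^k 1/j$ is the $k$th harmonic number (with $H_0^{(1)}=0$); empty sums are $0$. A congruence between rational numbers modulo $p^m$ means their difference lies in $p^m\mathbb{Z}_{(p)}$, where $\mathbb{Z}_{(p)}$ is the ring of rationals whose denominators are coprime to $p$. *)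

theory Defs
  imports Complex_Main "HOL-Computational_Algebra.Primes"
begin

definition Zp_loc :: "nat \<Rightarrow> rat set" where
  "Zp_loc p = {x. \<exists>a b. b \<noteq> 0 \<and> \<not> (int p dvd b) \<and> x = of_int a / of_int b}"

definition rat_cong :: "rat \<Rightarrow> rat \<Rightarrow> nat \<Rightarrow> nat \<Rightarrow> bool" where
  "rat_cong x y p m \<longleftrightarrow> (\<exists>z \<in> Zp_loc p. x - y = of_nat p ^ m * z)"

definition harm :: "nat \<Rightarrow> rat" where
  "harm k = (\<Sum>j=1..k. 1 / of_nat j)"

end

theory Submission
  imports Defs "HOL-Computational_Algebra.Polynomial"
begin

text \<open>
  Put \<open>t = p/n\<close> and \<open>m = p - q\<close>, so \<open>t \<equiv> 0 (mod p)\<close>. Because \<open>n t = p\<close>, the binomial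
  expansion gives \<open>(x - t)^n \<equiv> (x - p) x^(n-1) (mod p^2)\<close> for p-integral \<open>x\<close>, hence
  \<open>(q - t)_k^n / k!^n \<equiv> (-1)^k C(m,k) c_k^(n-1) (mod p^2)\<close> with \<open>c_k = (q)_k / k!\<close>, a polynomial in \<open>k\<close>
  of degree \<open>q - 1\<close>. Expanding \<open>1/(q + i - t)\<close> to first order, the inner difference is
  \<open>\<equiv> \<beta>_k + t \<gamma>_k (mod p^2)\<close>, where \<open>\<beta>_k = \<Sum>_{i<k} 1/(q+i) - H_k\<close> and \<open>\<gamma>_k = \<Sum>_{i<k} 1/(q+i)^2\<close>.

  Now \<open>c_k \<beta>_k = \<Sum>_{j<q-1} c_k/(k+1+j) - c_k H_(q-1)\<close> is again a polynomial of degree \<open>q - 1\<close>, so the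
  terms without \<open>t\<close> are alternating sums \<open>\<Sum>_{k\<le>m} (-1)^k C(m,k) P(k)\<close> with \<open>deg P \<le> (q-1)(n-1) < m\<close>,
  which vanish exactly. It remains to see \<open>\<Sum>_k (-1)^k C(m,k) c_k^(n-1) \<gamma>_k \<equiv> 0 (mod p)\<close>. Modulo \<open>p\<close>
  we have \<open>c_k \<equiv> (-1)^k C(m,k)\<close>, so the weight is \<open>((-1)^k C(m,k))^n\<close>, which is invariant under
  \<open>k \<mapsto> m - k\<close> as \<open>m n\<close> is even; and \<open>q + i \<equiv> -(m - i)\<close> gives \<open>\<gamma>_(m-k) \<equiv> H^(2)_m - H^(2)_k\<close>. Thus
  twice the sum is \<open>\<equiv> \<Sum>_k (-1)^k C(m,k) c_k^(n-1) (\<gamma>_k + \<gamma>_(m-k))\<close>, and modulo \<open>p\<close> the bracket is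
  \<open>\<Sum>_{j<q-1} 1/(k+1+j)^2\<close> plus a constant; the summand is then \<open>(-1)^k C(m,k)\<close> times a polynomial
  of degree \<open>\<le> (q-1)(n-1)\<close>, and the sum vanishes once more.
\<close>

section \<open>The local ring \<open>\<int>_(p)\<close> and congruences of rationals\<close>

lemma Zp_loc_of_int: "prime p \<Longrightarrow> of_int a \<in> Zp_loc p"
  unfolding Zp_loc_def by (intro CollectI exI[of _ a] exI[of _ 1]) (auto simp: prime_gt_1_nat)

lemma Zp_loc_of_nat: "prime p \<Longrightarrow> of_nat a \<in> Zp_loc p"
  using Zp_loc_of_int[of p "int a"] by simp

lemma Zp_loc_0: "prime p \<Longrightarrow> 0 \<in> Zp_loc p"
  using Zp_loc_of_nat[of p 0] by simp

lemma Zp_loc_1: "prime p \<Longrightarrow> 1 \<in> Zp_loc p"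
  using Zp_loc_of_nat[of p 1] by simp

lemma Zp_loc_inverse_int:
  assumes "prime p" "\<not> int p dvd b"
  shows "1 / of_int b \<in> Zp_loc p"
proof -
  have "b \<noteq> 0" using assms by auto
  then show ?thesis unfolding Zp_loc_def using assms by (intro CollectI exI[of _ 1] exI[of _ b]) auto
qed

lemma Zp_loc_inverse_nat:
  assumes "prime p" "0 < a" "a < p"
  shows "1 / of_nat a \<in> Zp_loc p"
proof -
  have "\<not> int p dvd int a" using assms(2,3) by (auto dest: dvd_imp_le)
  then show ?thesis using Zp_loc_inverse_int[OF assms(1), of "int a"] by simp
qed

lemma Zp_loc_inverse_fact:
  assumes "prime p" "k < p"
  shows "1 / fact k \<in> Zp_loc p"
proof -
  have "\<not> p dvd fact k" using prime_dvd_fact_iff[OF assms(1), of k] assms(2) by simp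
  then have "\<not> int p dvd int (fact k)" by (simp only: int_dvd_int_iff not_False_eq_True)
  then have "1 / of_int (int (fact k)) \<in> Zp_loc p" using Zp_loc_inverse_int[OF assms(1)] by blast
  then show ?thesis by (metis of_int_of_nat_eq of_nat_fact)
qed

lemma
  assumes "prime p" "x \<in> Zp_loc p" "y \<in> Zp_loc p"
  shows Zp_loc_add: "x + y \<in> Zp_loc p" and Zp_loc_mult: "x * y \<in> Zp_loc p"
    and Zp_loc_diff: "x - y \<in> Zp_loc p"
proof -
  obtain a b where ab: "b \<noteq> 0" "\<not> int p dvd b" "x = of_int a / of_int b"
    using assms(2) unfolding Zp_loc_def by auto
  obtain c d where cd: "d \<noteq> 0" "\<not> int p dvd d" "y = of_int c / of_int d"
    using assms(3) unfolding Zp_loc_def by auto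
  have "\<not> int p dvd b * d" using ab cd assms(1) by (simp add: prime_dvd_mult_iff)
  moreover have "b * d \<noteq> 0" using ab cd by simp
  moreover have "x + y = of_int (a * d + c * b) / of_int (b * d)"
    and "x - y = of_int (a * d - c * b) / of_int (b * d)"
    and "x * y = of_int (a * c) / of_int (b * d)"
    using ab(1) cd(1) unfolding ab(3) cd(3) by (simp_all add: field_simps)
  ultimately show "x + y \<in> Zp_loc p" "x - y \<in> Zp_loc p" "x * y \<in> Zp_loc p"
    unfolding Zp_loc_def by blast+
qed

lemma Zp_loc_sum: "prime p \<Longrightarrow> (\<And>i. i \<in> A \<Longrightarrow> f i \<in> Zp_loc p) \<Longrightarrow> sum f A \<in> Zp_loc p"
  by (induction A rule: infinite_finite_induct) (auto simp: Zp_loc_0 Zp_loc_add)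

lemma Zp_loc_prod: "prime p \<Longrightarrow> (\<And>i. i \<in> A \<Longrightarrow> f i \<in> Zp_loc p) \<Longrightarrow> prod f A \<in> Zp_loc p"
  by (induction A rule: infinite_finite_induct) (auto simp: Zp_loc_1 Zp_loc_mult)

lemma Zp_loc_power: "prime p \<Longrightarrow> x \<in> Zp_loc p \<Longrightarrow> x ^ k \<in> Zp_loc p"
  using Zp_loc_prod[of p "{..<k}" "\<lambda>_. x"] by simp

lemma rat_cong_iff_diff: "rat_cong x y p e \<longleftrightarrow> rat_cong (x - y) 0 p e"
  unfolding rat_cong_def by simp

lemma rat_cong_refl: "prime p \<Longrightarrow> rat_cong x x p e"
  unfolding rat_cong_def using Zp_loc_0[of p] by force

lemma rat_cong_add:
  assumes "prime p" "rat_cong x x' p e" "rat_cong y y' p e"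
  shows "rat_cong (x + y) (x' + y') p e"
proof -
  obtain z w where "z \<in> Zp_loc p" "x - x' = of_nat p ^ e * z" "w \<in> Zp_loc p" "y - y' = of_nat p ^ e * w"
    using assms(2,3) unfolding rat_cong_def by blast
  then show ?thesis unfolding rat_cong_def
    by (intro bexI[of _ "z + w"] Zp_loc_add[OF assms(1)]) (simp_all add: algebra_simps)
qed

lemma rat_cong_diff:
  assumes "prime p" "rat_cong x x' p e" "rat_cong y y' p e"
  shows "rat_cong (x - y) (x' - y') p e"
proof -
  obtain z w where "z \<in> Zp_loc p" "x - x' = of_nat p ^ e * z" "w \<in> Zp_loc p" "y - y' = of_nat p ^ e * w"
    using assms(2,3) unfolding rat_cong_def by blast
  then show ?thesis unfolding rat_cong_def
    by (intro bexI[of _ "z - w"] Zp_loc_diff[OF assms(1)]) (simp_all add: algebra_simps)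
qed

lemma rat_cong_sym: "prime p \<Longrightarrow> rat_cong x y p e \<Longrightarrow> rat_cong y x p e"
  using rat_cong_diff[of p y y e x y] rat_cong_refl[of p y e] unfolding rat_cong_iff_diff[of y x] by simp

lemma rat_cong_trans: "prime p \<Longrightarrow> rat_cong x y p e \<Longrightarrow> rat_cong y z p e \<Longrightarrow> rat_cong x z p e"
  using rat_cong_add[of p x y e y z] unfolding rat_cong_def by (simp add: algebra_simps)

lemma rat_cong_zero_mult:
  assumes p: "prime p" and "rat_cong x 0 p e" "rat_cong y 0 p f"
  shows "rat_cong (x * y) 0 p (e + f)"
proof -
  obtain z w where "z \<in> Zp_loc p" "x = of_nat p ^ e * z" "w \<in> Zp_loc p" "y = of_nat p ^ f * w"
    using assms(2,3) unfolding rat_cong_def by auto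
  then show ?thesis unfolding rat_cong_def
    by (intro bexI[of _ "z * w"] Zp_loc_mult[OF p]) (simp_all add: power_add mult_ac)
qed

lemma rat_cong_zero_square: "prime p \<Longrightarrow> rat_cong s 0 p 1 \<Longrightarrow> rat_cong (s * s) 0 p 2"
  using rat_cong_zero_mult[of p s 1 s 1] by (simp add: numeral_2_eq_2)

lemma rat_cong_mult_Zp_loc:
  assumes "prime p" "rat_cong x 0 p e" "y \<in> Zp_loc p"
  shows "rat_cong (x * y) 0 p e"
  using rat_cong_zero_mult[OF assms(1,2), of y 0] assms(3) by (simp add: rat_cong_def)

lemma rat_cong_Zp_loc:
  assumes p: "prime p" and "rat_cong x y p e" "y \<in> Zp_loc p"
  shows "x \<in> Zp_loc p"
proof -
  obtain z where "z \<in> Zp_loc p" "x = of_nat p ^ e * z + y"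
    using assms(2) unfolding rat_cong_def by (auto simp: algebra_simps)
  then show ?thesis using p assms(3) by (simp add: Zp_loc_add Zp_loc_mult Zp_loc_power Zp_loc_of_nat)
qed

lemma rat_cong_mult:
  assumes "prime p" "rat_cong x x' p e" "rat_cong y y' p e" "x \<in> Zp_loc p" "y' \<in> Zp_loc p"
  shows "rat_cong (x * y) (x' * y') p e"
proof -
  obtain z w where z: "z \<in> Zp_loc p" "x - x' = of_nat p ^ e * z"
    and w: "w \<in> Zp_loc p" "y - y' = of_nat p ^ e * w"
    using assms(2,3) unfolding rat_cong_def by blast
  have "x * y - x' * y' = (y - y') * x + (x - x') * y'" by (simp add: algebra_simps)
  also have "\<dots> = of_nat p ^ e * (w * x + z * y')" unfolding z(2) w(2) by (simp add: algebra_simps)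
  finally show ?thesis unfolding rat_cong_def
    by (rule bexI[OF _ Zp_loc_add[OF assms(1) Zp_loc_mult[OF assms(1) w(1) assms(4)]
          Zp_loc_mult[OF assms(1) z(1) assms(5)]]])
qed

lemma rat_cong_sum:
  "prime p \<Longrightarrow> (\<And>i. i \<in> A \<Longrightarrow> rat_cong (f i) (g i) p e) \<Longrightarrow>
    rat_cong (sum f A) (sum g A) p e"
  by (induction A rule: infinite_finite_induct) (simp_all add: rat_cong_refl rat_cong_add)

lemma rat_cong_prod:
  assumes "prime p" "\<And>i. i \<in> A \<Longrightarrow> rat_cong (f i) (g i) p e"
    and "\<And>i. i \<in> A \<Longrightarrow> g i \<in> Zp_loc p"
  shows "rat_cong (prod f A) (prod g A) p e"
  using assms(2,3)
proof (induction A rule: infinite_finite_induct)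
  case (insert i A)
  have i: "rat_cong (f i) (g i) p e" "g i \<in> Zp_loc p" using insert.prems by simp_all
  have "rat_cong (f i * prod f A) (g i * prod g A) p e"
  proof (rule rat_cong_mult[OF assms(1) i(1)])
    show "rat_cong (prod f A) (prod g A) p e" using insert.IH insert.prems by simp
    show "f i \<in> Zp_loc p" using rat_cong_Zp_loc[OF assms(1) i] .
    show "prod g A \<in> Zp_loc p" by (rule Zp_loc_prod[OF assms(1)]) (simp add: insert.prems)
  qed
  then show ?case using insert.hyps by simp
qed (simp_all add: rat_cong_refl assms(1))

lemma rat_cong_power:
  "prime p \<Longrightarrow> rat_cong x y p e \<Longrightarrow> y \<in> Zp_loc p \<Longrightarrow> rat_cong (x ^ k) (y ^ k) p e"
  using rat_cong_prod[of p "{..<k}" "\<lambda>_. x" "\<lambda>_. y"] by simp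

lemma rat_cong_inverse:
  assumes "prime p" "rat_cong x y p e" "1 / x \<in> Zp_loc p" "1 / y \<in> Zp_loc p" "x \<noteq> 0" "y \<noteq> 0"
  shows "rat_cong (1 / x) (1 / y) p e"
proof -
  have "1 / x - 1 / y = (y - x) * (1 / x * (1 / y))" using assms(5,6) by (simp add: field_simps)
  moreover have "rat_cong (y - x) 0 p e"
    using rat_cong_sym[OF assms(1,2)] unfolding rat_cong_iff_diff[of y x] .
  ultimately show ?thesis unfolding rat_cong_iff_diff[of "1 / x"]
    using rat_cong_mult_Zp_loc[OF assms(1) _ Zp_loc_mult[OF assms(1,3,4)]] by simp
qed

lemma rat_cong_cancel:
  assumes "prime p" "rat_cong (of_nat c * x) 0 p e" "\<not> p dvd c"
  shows "rat_cong x 0 p e"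
proof -
  have "1 / of_int (int c) \<in> Zp_loc p"
    using assms(1,3) by (intro Zp_loc_inverse_int) (simp_all only: int_dvd_int_iff not_False_eq_True)
  moreover have "c \<noteq> 0" using assms(3) by (metis dvd_0_right)
  ultimately show ?thesis using rat_cong_mult_Zp_loc[OF assms(1,2), of "1 / of_nat c"] by simp
qed

lemma rat_cong_mono:
  assumes "prime p" "rat_cong x y p e" "e' \<le> e"
  shows "rat_cong x y p e'"
proof -
  obtain z where z: "z \<in> Zp_loc p" "x - y = of_nat p ^ e * z"
    using assms(2) unfolding rat_cong_def by blast
  have "x - y = of_nat p ^ e' * (of_nat p ^ (e - e') * z)"
    using z(2) assms(3) by (simp add: mult.assoc[symmetric] power_add[symmetric])
  then show ?thesis unfolding rat_cong_def
    using Zp_loc_mult[OF assms(1) Zp_loc_power[OF assms(1) Zp_loc_of_nat[OF assms(1)]] z(1)] by blast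
qed

lemma rat_cong_power_expansion:
  assumes p: "prime p" and x: "x \<in> Zp_loc p" and s: "rat_cong s 0 p 1"
  shows "rat_cong ((x - s) ^ N) (x ^ N - of_nat N * s * x ^ (N - 1)) p 2"
proof (induction N)
  case 0
  show ?case by (simp add: rat_cong_refl p)
next
  case (Suc N)
  have sZ: "s \<in> Zp_loc p" using rat_cong_Zp_loc[OF p s Zp_loc_0[OF p]] .
  have "rat_cong ((x - s) * (x - s) ^ N) ((x - s) * (x ^ N - of_nat N * s * x ^ (N - 1))) p 2"
    using p x sZ
    by (intro rat_cong_mult[OF p rat_cong_refl Suc.IH]) (simp_all add: Zp_loc_diff Zp_loc_mult Zp_loc_power Zp_loc_of_nat)
  moreover have "(x - s) * (x ^ N - of_nat N * s * x ^ (N - 1))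
      = (x ^ Suc N - of_nat (Suc N) * s * x ^ N) + s * s * (of_nat N * x ^ (N - 1))"
    by (cases N) (simp_all add: algebra_simps)
  moreover have "rat_cong (s * s * (of_nat N * x ^ (N - 1))) 0 p 2"
    by (intro rat_cong_mult_Zp_loc[OF p rat_cong_zero_square[OF p s]] Zp_loc_mult Zp_loc_power
        Zp_loc_of_nat p x)
  ultimately show ?case
    using rat_cong_trans[OF p _ rat_cong_add[OF p rat_cong_refl[OF p]]] by fastforce
qed

lemma rat_cong_inverse_expansion:
  assumes p: "prime p" and s: "rat_cong s 0 p 1"
    and "1 / a \<in> Zp_loc p" "1 / (a - s) \<in> Zp_loc p" "a \<noteq> 0" "a \<noteq> s"
  shows "rat_cong (1 / (a - s)) (1 / a + s / a ^ 2) p 2"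
proof -
  have "1 / (a - s) - (1 / a + s / a ^ 2) = s * s * ((1 / a) ^ 2 * (1 / (a - s)))"
    using assms(5,6) by (simp add: field_simps power2_eq_square)
  moreover have "rat_cong (s * s * ((1 / a) ^ 2 * (1 / (a - s)))) 0 p 2"
    by (intro rat_cong_mult_Zp_loc[OF p rat_cong_zero_square[OF p s]] Zp_loc_mult Zp_loc_power
        p assms(3,4))
  ultimately show ?thesis by (simp add: rat_cong_iff_diff[of "1 / (a - s)"])
qed

section \<open>Alternating binomial sums of polynomials\<close>

lemma alternating_binomial_sum_Suc:
  fixes f :: "nat \<Rightarrow> 'a::comm_ring_1"
  shows "(\<Sum>k\<le>Suc m. (-1)^k * of_nat (Suc m choose k) * f k)
       = - (\<Sum>k\<le>m. (-1)^k * of_nat (m choose k) * (f (Suc k) - f k))"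
proof -
  have "(\<Sum>k\<le>Suc m. (-1)^k * of_nat (Suc m choose k) * f k)
     = (\<Sum>k\<le>Suc m. (-1)^k * of_nat (m choose k) * f k)
       + (\<Sum>k\<le>Suc m. (if k = 0 then 0 else (-1)^k * of_nat (m choose (k - 1)) * f k))"
    unfolding sum.distrib[symmetric]
  proof (rule sum.cong)
    show "(-1)^k * of_nat (Suc m choose k) * f k
        = (-1)^k * of_nat (m choose k) * f k + (if k = 0 then 0 else (-1)^k * of_nat (m choose (k - 1)) * f k)"
      for k by (cases k) (simp_all add: algebra_simps)
  qed simp
  also have "(\<Sum>k\<le>Suc m. (-1)^k * of_nat (m choose k) * f k) = (\<Sum>k\<le>m. (-1)^k * of_nat (m choose k) * f k)"
    by (simp add: binomial_eq_0)
  also have "(\<Sum>k\<le>Suc m. (if k = 0 then 0 else (-1)^k * of_nat (m choose (k - 1)) * f k))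
     = (\<Sum>k\<le>m. (-1)^(Suc k) * of_nat (m choose k) * f (Suc k))"
    by (subst sum.atMost_Suc_shift) simp
  finally show ?thesis by (simp add: sum_negf[symmetric] sum.distrib[symmetric] algebra_simps)
qed

lemma alternating_binomial_sum_power:
  "j < m \<Longrightarrow> (\<Sum>k\<le>m. (-1)^k * of_nat (m choose k) * of_nat k ^ j) = (0::'a::comm_ring_1)"
proof (induction m arbitrary: j)
  case (Suc m)
  have diff: "(of_nat (Suc k) :: 'a) ^ j - of_nat k ^ j = (\<Sum>i<j. of_nat (j choose i) * of_nat k ^ i)" for k
  proof -
    have "(of_nat k + 1 :: 'a) ^ j = (\<Sum>i\<le>j. of_nat (j choose i) * of_nat k ^ i)"
      by (subst binomial_ring) (simp add: mult.commute)
    then show ?thesis by (simp add: lessThan_Suc_atMost[symmetric] add.commute)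
  qed
  have "(\<Sum>k\<le>Suc m. (-1)^k * of_nat (Suc m choose k) * (of_nat k :: 'a) ^ j)
      = - (\<Sum>k\<le>m. (-1)^k * of_nat (m choose k) * (\<Sum>i<j. of_nat (j choose i) * of_nat k ^ i))"
    unfolding alternating_binomial_sum_Suc diff ..
  also have "\<dots> = - (\<Sum>i<j. of_nat (j choose i) * (\<Sum>k\<le>m. (-1)^k * of_nat (m choose k) * of_nat k ^ i))"
    by (simp add: sum_distrib_left sum_distrib_right mult_ac sum.swap[of _ "{..m}"])
  also have "\<dots> = 0"
    using Suc by (simp add: sum.neutral)
  finally show ?case .
qed simp

lemma alternating_binomial_sum_poly:
  fixes P :: "'a::comm_ring_1 poly"
  assumes "degree P < m"
  shows "(\<Sum>k\<le>m. (-1)^k * of_nat (m choose k) * poly P (of_nat k)) = 0"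
proof -
  have "(\<Sum>k\<le>m. (-1)^k * of_nat (m choose k) * poly P (of_nat k))
     = (\<Sum>i\<le>degree P. coeff P i * (\<Sum>k\<le>m. (-1)^k * of_nat (m choose k) * of_nat k ^ i))"
    by (simp add: poly_altdef sum_distrib_left sum_distrib_right mult_ac sum.swap[of _ "{..m}"])
  also have "\<dots> = 0"
    using assms by (simp add: alternating_binomial_sum_power sum.neutral)
  finally show ?thesis .
qed

definition poly_fun :: "nat \<Rightarrow> (nat \<Rightarrow> 'a::comm_ring_1) \<Rightarrow> bool" where
  "poly_fun d f \<longleftrightarrow> (\<exists>P. degree P \<le> d \<and> (\<forall>k. f k = poly P (of_nat k)))"

lemma alternating_binomial_sum_poly_fun:
  assumes "poly_fun d f" "d < m"
  shows "(\<Sum>k\<le>m. (-1)^k * of_nat (m choose k) * f k) = 0"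
proof -
  obtain P where "degree P \<le> d" "\<And>k. f k = poly P (of_nat k)"
    using assms(1) unfolding poly_fun_def by blast
  then show ?thesis using alternating_binomial_sum_poly[of P m] assms(2) by simp
qed

lemma poly_fun_const: "poly_fun 0 (\<lambda>k. c)"
  unfolding poly_fun_def by (intro exI[of _ "[:c:]"]) simp

lemma poly_fun_mono: "poly_fun d f \<Longrightarrow> d \<le> d' \<Longrightarrow> poly_fun d' f"
  unfolding poly_fun_def by (auto intro: order.trans)

lemma poly_fun_add: "poly_fun d f \<Longrightarrow> poly_fun d g \<Longrightarrow> poly_fun d (\<lambda>k. f k + g k)"
  unfolding poly_fun_def by (metis degree_add_le poly_add)

lemma poly_fun_diff: "poly_fun d f \<Longrightarrow> poly_fun d g \<Longrightarrow> poly_fun d (\<lambda>k. f k - g k)"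
  unfolding poly_fun_def by (metis degree_diff_le poly_diff)

lemma poly_fun_mult: "poly_fun d f \<Longrightarrow> poly_fun e g \<Longrightarrow> poly_fun (d + e) (\<lambda>k. f k * g k)"
  unfolding poly_fun_def by (metis add_mono degree_mult_le order.trans poly_mult)

lemma poly_fun_mult_const: "poly_fun d f \<Longrightarrow> poly_fun d (\<lambda>k. f k * c)"
  using poly_fun_mult[OF _ poly_fun_const, of d f c] by simp

lemma poly_fun_divide_const: "poly_fun d f \<Longrightarrow> poly_fun d (\<lambda>k. f k / (c :: 'a::field))"
  using poly_fun_mult_const[of d f "inverse c"] by (simp add: divide_inverse)

lemma poly_fun_power: "poly_fun d f \<Longrightarrow> poly_fun (d * j) (\<lambda>k. f k ^ j)"
proof (induction j)
  case 0
  then show ?case using poly_fun_const[of 1] by simp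
next
  case (Suc j)
  then show ?case using poly_fun_mult[OF Suc.prems Suc.IH[OF Suc.prems]] by (simp add: add.commute)
qed

lemma poly_fun_sum: "(\<And>i. i \<in> A \<Longrightarrow> poly_fun d (f i)) \<Longrightarrow> poly_fun d (\<lambda>k. \<Sum>i\<in>A. f i k)"
  by (induction A rule: infinite_finite_induct)
     (simp_all add: poly_fun_add poly_fun_mono[OF poly_fun_const[of 0]])

lemma poly_fun_prod_linear: "poly_fun (card A) (\<lambda>k. \<Prod>j\<in>A. of_nat k + c j)"
proof (induction A rule: infinite_finite_induct)
  case (insert j A)
  have "poly_fun 1 (\<lambda>k. of_nat k + c j)"
    unfolding poly_fun_def by (intro exI[of _ "[:c j, 1:]"]) simp
  from poly_fun_mult[OF this insert.IH] show ?case using insert.hyps by simp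
qed (simp_all add: poly_fun_mono[OF poly_fun_const[of 1]])

section \<open>Pochhammer quotients, signed binomials and harmonic sums\<close>

lemma pochhammer_of_nat_over_fact:
  assumes "q > 0"
  shows "pochhammer (of_nat q) k / fact k = (\<Prod>j<q - 1. of_nat k + 1 + of_nat j) / (fact (q - 1) :: 'a::field_char_0)"
proof -
  have q: "of_nat (q - 1) + 1 = (of_nat q :: 'a)" using assms by (simp add: of_nat_diff)
  have "fact (q - 1) * pochhammer (of_nat q) k = (pochhammer 1 (q - 1 + k) :: 'a)"
    using pochhammer_product'[of "1::'a" "q - 1" k] q by (simp add: pochhammer_fact add.commute)
  also have "\<dots> = fact k * pochhammer (1 + of_nat k) (q - 1)"
    using pochhammer_product'[of "1::'a" k "q - 1"] by (simp add: pochhammer_fact add.commute)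
  also have "pochhammer (1 + of_nat k :: 'a) (q - 1) = (\<Prod>j<q - 1. of_nat k + 1 + of_nat j)"
    unfolding pochhammer_prod atLeast0LessThan by (simp add: algebra_simps)
  finally show ?thesis by (simp add: field_simps)
qed

lemma poly_fun_pochhammer_over_fact:
  assumes "q > 0"
  shows "poly_fun (q - 1) (\<lambda>k. pochhammer (of_nat q) k / (fact k :: 'a::field_char_0))"
proof -
  have "poly_fun (q - 1) (\<lambda>k. (\<Prod>j<q - 1. of_nat k + 1 + of_nat j) / (fact (q - 1) :: 'a))"
    using poly_fun_divide_const[OF poly_fun_prod_linear[of "{..<q - 1}" "\<lambda>j. 1 + of_nat j"]]
    by (simp add: add.assoc)
  then show ?thesis by (simp only: pochhammer_of_nat_over_fact[OF assms])
qed

lemma poly_fun_pochhammer_over_fact_div: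
  assumes "i < q - 1"
  shows "poly_fun (q - 1)
    (\<lambda>k. pochhammer (of_nat q) k / fact k / (of_nat k + 1 + of_nat i :: 'a::field_char_0))"
proof -
  let ?A = "{..<q - 1} - {i}"
  have q: "q > 0" using assms by simp
  have eq: "pochhammer (of_nat q) k / fact k / (of_nat k + 1 + of_nat i)
      = (\<Prod>j\<in>?A. of_nat k + (1 + of_nat j)) / (fact (q - 1) :: 'a)" for k
  proof -
    have "(\<Prod>j<q - 1. of_nat k + 1 + of_nat j)
        = (of_nat k + 1 + of_nat i) * (\<Prod>j\<in>?A. of_nat k + (1 + of_nat j) :: 'a)"
      using assms by (subst prod.remove[of _ i]) (auto simp: add.assoc)
    moreover have "(of_nat k + 1 + of_nat i :: 'a) \<noteq> 0"
      using of_nat_neq_0[of "k + i"] by (simp add: add_ac)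
    ultimately show ?thesis
      unfolding pochhammer_of_nat_over_fact[OF q] by simp
  qed
  have "card ?A \<le> q - 1" using card_Diff1_le[of "{..<q - 1}" i] by simp
  from poly_fun_mono[OF poly_fun_divide_const[OF poly_fun_prod_linear[of ?A "\<lambda>j. 1 + of_nat j"]] this]
  show ?thesis by (simp only: eq)
qed

lemma signed_binomial_eq_pochhammer:
  "(-1)^k * of_nat (m choose k) = pochhammer (- of_nat m) k / (fact k :: 'a::field_char_0)"
proof -
  have "(of_nat (m choose k) :: 'a) = (-1)^k * pochhammer (- of_nat m) k / fact k"
    by (simp add: binomial_gbinomial gbinomial_pochhammer)
  then show ?thesis by (simp add: power_mult_distrib[symmetric])
qed

lemma signed_binomial_power_reflect:
  assumes "k \<le> m" "even (m * n)"
  shows "((-1)^(m - k) * of_nat (m choose (m - k)) :: 'a::comm_ring_1) ^ n = ((-1)^k * of_nat (m choose k)) ^ n"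
proof -
  have "(m - k) * n + k * n = m * n" using assms(1) by (simp add: add_mult_distrib[symmetric])
  then have "even ((m - k) * n) \<longleftrightarrow> even (k * n)" using assms(2) by (metis even_add)
  then have "(-1 :: 'a) ^ ((m - k) * n) = (-1) ^ (k * n)" by (simp add: minus_one_power_iff)
  then show ?thesis
    using binomial_symmetric[OF assms(1)] by (simp add: power_mult_distrib power_mult)
qed

lemma harm_add: "harm (x + y) = harm x + (\<Sum>i<y. 1 / (of_nat x + 1 + of_nat i))"
proof (induction y)
  case (Suc y)
  have "harm (x + Suc y) = harm (x + y) + 1 / of_nat (Suc (x + y))"
    unfolding harm_def by (simp add: sum.cl_ivl_Suc)
  then show ?case using Suc by (simp add: add_ac)
qed simp

definition harm2 :: "nat \<Rightarrow> rat" where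
  "harm2 k = (\<Sum>j=1..k. 1 / of_nat j ^ 2)"

lemma harm2_add: "harm2 (x + y) = harm2 x + (\<Sum>i<y. 1 / (of_nat x + 1 + of_nat i) ^ 2)"
proof (induction y)
  case (Suc y)
  have "harm2 (x + Suc y) = harm2 (x + y) + 1 / of_nat (Suc (x + y)) ^ 2"
    unfolding harm2_def by (simp add: sum.cl_ivl_Suc)
  then show ?case using Suc by (simp add: add_ac)
qed simp

locale hypergeometric_congruence =
  fixes n q p :: nat
  assumes n_gt_2: "n > 2" and q_pos: "q > 0" and parity: "even n \<or> odd q"
    and prime_p: "prime p" and p_large: "p > max n ((q - 1) * n + 1)"
begin

declare rat_cong_trans[OF prime_p, trans]

definition m :: nat where "m = p - q"
definition t :: rat where "t = of_nat p / of_nat n"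

definition hyp_coeff :: "nat \<Rightarrow> rat" where
  "hyp_coeff k = pochhammer (of_nat q - of_nat p / of_nat n) k ^ n / pochhammer 1 k ^ n"
definition harm_gap :: "nat \<Rightarrow> rat" where
  "harm_gap k = (\<Sum>i<k. 1 / (of_nat q + of_nat i - of_nat p / of_nat n)) - harm k"

text \<open>\<open>c_k\<close>, \<open>\<beta>_k\<close> and \<open>\<gamma>_k\<close> of the proof idea are \<open>rising_ratio\<close>, \<open>harm_gap0\<close> and \<open>shifted_harm2\<close>.\<close>

definition signed_binom :: "nat \<Rightarrow> rat" where "signed_binom k = (-1)^k * of_nat (m choose k)"
definition rising_ratio :: "nat \<Rightarrow> rat" where "rising_ratio k = pochhammer (of_nat q) k / fact k"
definition hyp_coeff_approx :: "nat \<Rightarrow> rat" where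
  "hyp_coeff_approx k = signed_binom k * rising_ratio k ^ (n - 1)"
definition harm_gap0 :: "nat \<Rightarrow> rat" where
  "harm_gap0 k = (\<Sum>i<k. 1 / (of_nat q + of_nat i)) - harm k"
definition shifted_harm2 :: "nat \<Rightarrow> rat" where
  "shifted_harm2 k = (\<Sum>i<k. 1 / (of_nat q + of_nat i) ^ 2)"

lemma n_lt_p: "n < p"
  using p_large by simp

lemma p_eq: "p = q + m"
proof -
  have "(q - 1) * 1 \<le> (q - 1) * n" using n_gt_2 by (intro mult_le_mono2) auto
  then show ?thesis using p_large q_pos unfolding m_def by linarith
qed

lemma degree_lt_m: "(q - 1) * (n - 1) < m"
proof -
  have "(q - 1) * (n - 1) + (q - 1) = (q - 1) * (n - 1 + 1)" by (simp add: distrib_left)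
  also have "n - 1 + 1 = n" using n_gt_2 by simp
  finally have "(q - 1) * (n - 1) + (q - 1) = (q - 1) * n" .
  then show ?thesis using p_large q_pos unfolding m_def by linarith
qed

lemma even_m_times_n: "even (m * n)"
proof -
  have "odd p" using prime_p n_lt_p n_gt_2 prime_odd_nat[of p] by auto
  then show ?thesis using parity p_eq by (metis even_add even_mult_iff)
qed

lemma t_cong_0: "rat_cong t 0 p 1"
proof -
  have "1 / of_nat n \<in> Zp_loc p" using Zp_loc_inverse_nat[OF prime_p] n_gt_2 n_lt_p by simp
  then show ?thesis unfolding rat_cong_def t_def by (intro bexI[of _ "1 / of_nat n"]) simp_all
qed

lemma t_Zp_loc: "t \<in> Zp_loc p"
  using rat_cong_Zp_loc[OF prime_p t_cong_0 Zp_loc_0[OF prime_p]] .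

lemma
  assumes "i < m"
  shows shifted_denominator_nonzero: "of_nat q + of_nat i - t \<noteq> 0"
    and inverse_shifted_denominator_Zp_loc: "1 / (of_nat q + of_nat i - t) \<in> Zp_loc p"
proof -
  let ?d = "int n * int (q + i) - int p"
  have "\<not> int p dvd ?d"
  proof
    assume "int p dvd ?d"
    then have "int p dvd int n * int (q + i)" by (metis dvd_diff_commute dvd_refl dvd_trans zdvd_zdiffD)
    then have "p dvd n * (q + i)" by (metis of_nat_mult int_dvd_int_iff)
    then show False
      using prime_dvd_mult_iff[OF prime_p] n_gt_2 n_lt_p assms p_eq q_pos by (auto dest: dvd_imp_le)
  qed
  have eq: "of_nat q + of_nat i - t = of_int ?d / of_nat n"
    unfolding t_def using n_gt_2 by (simp add: field_simps)
  show "of_nat q + of_nat i - t \<noteq> 0"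
  proof
    assume "of_nat q + of_nat i - t = 0"
    then have "of_nat (n * (q + i)) = (of_nat p :: rat)"
      unfolding t_def using n_gt_2 by (simp add: field_simps)
    then have "n * (q + i) = p" by (simp only: of_nat_eq_iff)
    then have "?d = 0" by (metis of_nat_mult diff_self)
    then show False using \<open>\<not> int p dvd ?d\<close> by simp
  qed
  show "1 / (of_nat q + of_nat i - t) \<in> Zp_loc p"
    unfolding eq
    using Zp_loc_mult[OF prime_p Zp_loc_of_nat[OF prime_p]
        Zp_loc_inverse_int[OF prime_p \<open>\<not> int p dvd ?d\<close>], of n]
    by simp
qed

lemma signed_binom_Zp_loc: "signed_binom k \<in> Zp_loc p"
  unfolding signed_binom_def using Zp_loc_of_int[OF prime_p, of "(-1)^k * int (m choose k)"] by simp

lemma rising_ratio_Zp_loc: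
  assumes "k < p"
  shows "rising_ratio k \<in> Zp_loc p"
proof -
  have "of_nat (pochhammer q k) * (1 / fact k) \<in> Zp_loc p"
    by (intro Zp_loc_mult Zp_loc_of_nat Zp_loc_inverse_fact prime_p assms)
  then show ?thesis unfolding rising_ratio_def by (simp add: pochhammer_of_nat)
qed

lemma signed_binom_eq_pochhammer: "signed_binom k = pochhammer (of_nat q - of_nat p) k / fact k"
proof -
  have "(- of_nat m :: rat) = of_nat q - of_nat p" using p_eq by simp
  then show ?thesis unfolding signed_binom_def signed_binomial_eq_pochhammer by simp
qed

lemma rising_ratio_cong_signed_binom:
  assumes "k \<le> m"
  shows "rat_cong (rising_ratio k) (signed_binom k) p 1"
proof -
  have "k < p" using assms p_eq q_pos by simp
  have "rat_cong (pochhammer (of_nat q) k) (pochhammer (of_nat q - of_nat p) k) p 1"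
    unfolding pochhammer_prod
  proof (rule rat_cong_prod[OF prime_p])
    show "rat_cong (of_nat q + of_nat i) (of_nat q - of_nat p + of_nat i) p 1" for i
      unfolding rat_cong_def using Zp_loc_1[OF prime_p] by force
    show "of_nat q - of_nat p + of_nat i \<in> Zp_loc p" for i
      by (intro Zp_loc_add Zp_loc_diff Zp_loc_of_nat prime_p)
  qed
  from rat_cong_mult[OF prime_p this rat_cong_refl[OF prime_p] _ Zp_loc_inverse_fact[OF prime_p \<open>k < p\<close>]]
  have "rat_cong (pochhammer (of_nat q) k * (1 / fact k)) (pochhammer (of_nat q - of_nat p) k * (1 / fact k)) p 1"
    using Zp_loc_of_nat[OF prime_p, of "pochhammer q k"] by (simp add: pochhammer_of_nat)
  then show ?thesis unfolding rising_ratio_def signed_binom_eq_pochhammer by simp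
qed

lemma power_shift_cong:
  assumes "x \<in> Zp_loc p"
  shows "rat_cong ((x - t) ^ n) ((x - of_nat p) * x ^ (n - 1)) p 2"
proof -
  have "x ^ n - of_nat n * t * x ^ (n - 1) = (x - of_nat p) * x ^ (n - 1)"
  proof -
    have "x ^ n = x * x ^ (n - 1)" using n_gt_2 by (simp add: power_eq_if)
    moreover have "of_nat n * t = of_nat p" unfolding t_def using n_gt_2 by simp
    ultimately show ?thesis by (simp add: algebra_simps)
  qed
  then show ?thesis using rat_cong_power_expansion[OF prime_p assms t_cong_0, of n] by simp
qed

lemma hyp_coeff_eq: "hyp_coeff k = (\<Prod>i<k. (of_nat q + of_nat i - t) ^ n) * (1 / fact k) ^ n"
proof -
  have "pochhammer (of_nat q - t) k = (\<Prod>i<k. of_nat q + of_nat i - t)"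
    unfolding pochhammer_prod atLeast0LessThan by (simp add: algebra_simps)
  then show ?thesis unfolding hyp_coeff_def t_def[symmetric] pochhammer_fact[symmetric]
    by (simp add: prod_power_distrib power_one_over)
qed

lemma hyp_coeff_approx_eq:
  "hyp_coeff_approx k = (\<Prod>i<k. (of_nat q - of_nat p + of_nat i) * (of_nat q + of_nat i) ^ (n - 1)) * (1 / fact k) ^ n"
proof -
  have "fact k ^ n = fact k * (fact k ^ (n - 1) :: rat)"
    using n_gt_2 by (simp add: power_eq_if)
  then show ?thesis
    unfolding hyp_coeff_approx_def signed_binom_eq_pochhammer rising_ratio_def pochhammer_prod atLeast0LessThan
    by (simp add: prod.distrib prod_power_distrib power_divide power_one_over)
qed

lemma hyp_coeff_cong:
  assumes "k \<le> m"
  shows "rat_cong (hyp_coeff k) (hyp_coeff_approx k) p 2"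
  unfolding hyp_coeff_eq hyp_coeff_approx_eq
proof (rule rat_cong_mult[OF prime_p rat_cong_prod[OF prime_p] rat_cong_refl[OF prime_p]])
  have "k < p" using assms p_eq q_pos by simp
  fix i
  have qi: "of_nat q + of_nat i \<in> Zp_loc p" by (intro Zp_loc_add Zp_loc_of_nat prime_p)
  show "rat_cong ((of_nat q + of_nat i - t) ^ n) ((of_nat q - of_nat p + of_nat i) * (of_nat q + of_nat i) ^ (n - 1)) p 2"
    using power_shift_cong[OF qi] by (simp add: algebra_simps)
  show "(of_nat q - of_nat p + of_nat i) * (of_nat q + of_nat i) ^ (n - 1) \<in> Zp_loc p"
    using qi by (intro Zp_loc_mult Zp_loc_add Zp_loc_diff Zp_loc_power Zp_loc_of_nat prime_p)
  show "(\<Prod>i<k. (of_nat q + of_nat i - t) ^ n) \<in> Zp_loc p"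
    by (intro Zp_loc_prod Zp_loc_power Zp_loc_diff Zp_loc_add Zp_loc_of_nat t_Zp_loc prime_p)
  show "(1 / fact k) ^ n \<in> Zp_loc p"
    by (intro Zp_loc_power Zp_loc_inverse_fact prime_p \<open>k < p\<close>)
qed

lemma hyp_coeff_approx_Zp_loc: "k \<le> m \<Longrightarrow> hyp_coeff_approx k \<in> Zp_loc p"
  unfolding hyp_coeff_approx_def using p_eq q_pos
  by (intro Zp_loc_mult Zp_loc_power signed_binom_Zp_loc rising_ratio_Zp_loc prime_p) simp

lemma hyp_coeff_Zp_loc: "k \<le> m \<Longrightarrow> hyp_coeff k \<in> Zp_loc p"
  using rat_cong_Zp_loc[OF prime_p hyp_coeff_cong hyp_coeff_approx_Zp_loc] .

lemma inverse_q_plus_Zp_loc: "i < m \<Longrightarrow> 1 / (of_nat q + of_nat i) \<in> Zp_loc p"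
  using Zp_loc_inverse_nat[OF prime_p, of "q + i"] q_pos p_eq by simp

lemma harm_gap_cong:
  assumes "k \<le> m"
  shows "rat_cong (harm_gap k) (harm_gap0 k + t * shifted_harm2 k) p 2"
proof -
  have "rat_cong (\<Sum>i<k. 1 / (of_nat q + of_nat i - t))
      (\<Sum>i<k. 1 / (of_nat q + of_nat i) + t / (of_nat q + of_nat i) ^ 2) p 2"
  proof (rule rat_cong_sum[OF prime_p])
    fix i assume "i \<in> {..<k}"
    then have i: "i < m" using assms by simp
    show "rat_cong (1 / (of_nat q + of_nat i - t)) (1 / (of_nat q + of_nat i) + t / (of_nat q + of_nat i) ^ 2) p 2"
      using q_pos shifted_denominator_nonzero[OF i] inverse_shifted_denominator_Zp_loc[OF i]
      by (intro rat_cong_inverse_expansion[OF prime_p t_cong_0 inverse_q_plus_Zp_loc[OF i]]) auto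
  qed
  then show ?thesis
    using rat_cong_diff[OF prime_p _ rat_cong_refl[OF prime_p], of _ _ 2 "harm k"]
    unfolding harm_gap_def harm_gap0_def shifted_harm2_def t_def[symmetric]
    by (simp add: sum.distrib sum_distrib_left algebra_simps)
qed

lemma harm_gap0_eq: "harm_gap0 k = (\<Sum>j<q - 1. 1 / (of_nat k + 1 + of_nat j)) - harm (q - 1)"
proof -
  have "of_nat (q - 1) + 1 = (of_nat q :: rat)" using q_pos by (simp add: of_nat_diff)
  then have "harm (q - 1 + k) = harm (q - 1) + (\<Sum>i<k. 1 / (of_nat q + of_nat i))"
    using harm_add[of "q - 1" k] by simp
  moreover have "harm (k + (q - 1)) = harm k + (\<Sum>j<q - 1. 1 / (of_nat k + 1 + of_nat j))"
    by (rule harm_add)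
  ultimately show ?thesis unfolding harm_gap0_def by (simp add: add.commute)
qed

lemma shifted_harm2_eq:
  "shifted_harm2 k = harm2 k + (\<Sum>j<q - 1. 1 / (of_nat k + 1 + of_nat j) ^ 2) - harm2 (q - 1)"
proof -
  have "of_nat (q - 1) + 1 = (of_nat q :: rat)" using q_pos by (simp add: of_nat_diff)
  then have "harm2 (q - 1 + k) = harm2 (q - 1) + shifted_harm2 k"
    using harm2_add[of "q - 1" k] unfolding shifted_harm2_def by simp
  moreover have "harm2 (k + (q - 1)) = harm2 k + (\<Sum>j<q - 1. 1 / (of_nat k + 1 + of_nat j) ^ 2)"
    by (rule harm2_add)
  ultimately show ?thesis by (simp add: add.commute)
qed

lemma poly_fun_rising_ratio: "poly_fun (q - 1) rising_ratio"
  using poly_fun_pochhammer_over_fact[OF q_pos] unfolding rising_ratio_def[abs_def] .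

lemma poly_fun_rising_ratio_div:
  "j < q - 1 \<Longrightarrow> poly_fun (q - 1) (\<lambda>k. rising_ratio k / (of_nat k + 1 + of_nat j))"
  using poly_fun_pochhammer_over_fact_div unfolding rising_ratio_def[abs_def] .

lemma poly_fun_rising_ratio_harm_gap0: "poly_fun (q - 1) (\<lambda>k. rising_ratio k * harm_gap0 k)"
proof -
  have eq: "rising_ratio k * harm_gap0 k
      = (\<Sum>j<q - 1. rising_ratio k / (of_nat k + 1 + of_nat j)) - rising_ratio k * harm (q - 1)" for k
    unfolding harm_gap0_eq by (simp add: sum_distrib_left right_diff_distrib)
  have "poly_fun (q - 1) (\<lambda>k. \<Sum>j<q - 1. rising_ratio k / (of_nat k + 1 + of_nat j))"
    by (rule poly_fun_sum, rule poly_fun_rising_ratio_div) simp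
  from poly_fun_diff[OF this poly_fun_mult_const[OF poly_fun_rising_ratio, of "harm (q - 1)"]]
  show ?thesis by (simp only: eq)
qed

lemma sum_signed_binom_poly_fun:
  "poly_fun ((q - 1) * (n - 1)) f \<Longrightarrow> (\<Sum>k=0..m. signed_binom k * f k) = 0"
  unfolding signed_binom_def atLeast0AtMost using alternating_binomial_sum_poly_fun[OF _ degree_lt_m] by simp

lemma sum_hyp_coeff_approx_harm_gap0: "(\<Sum>k=0..m. hyp_coeff_approx k * harm_gap0 k) = 0"
proof -
  have split: "n - 1 = (n - 2) + 1" using n_gt_2 by simp
  then have deg: "(q - 1) * (n - 2) + (q - 1) = (q - 1) * (n - 1)" by (simp add: distrib_left)
  have eq: "hyp_coeff_approx k * harm_gap0 k
      = signed_binom k * (rising_ratio k ^ (n - 2) * (rising_ratio k * harm_gap0 k))" for k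
    unfolding hyp_coeff_approx_def split power_add by simp
  have "poly_fun ((q - 1) * (n - 1)) (\<lambda>k. rising_ratio k ^ (n - 2) * (rising_ratio k * harm_gap0 k))"
    using poly_fun_mult[OF poly_fun_power[OF poly_fun_rising_ratio] poly_fun_rising_ratio_harm_gap0, of "n - 2"]
    unfolding deg .
  from sum_signed_binom_poly_fun[OF this] show ?thesis by (simp only: eq)
qed

lemma sum_hyp_coeff_approx_harm_gap0_sq: "(\<Sum>k=0..m. hyp_coeff_approx k * harm_gap0 k ^ 2) = 0"
proof -
  have split: "n - 1 = (n - 3) + 2" using n_gt_2 by simp
  then have deg: "(q - 1) * (n - 3) + (q - 1) * 2 = (q - 1) * (n - 1)" by (simp add: distrib_left)
  have eq: "hyp_coeff_approx k * harm_gap0 k ^ 2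
      = signed_binom k * (rising_ratio k ^ (n - 3) * (rising_ratio k * harm_gap0 k) ^ 2)" for k
    unfolding hyp_coeff_approx_def split power_add by (simp add: power_mult_distrib)
  have "poly_fun ((q - 1) * (n - 1)) (\<lambda>k. rising_ratio k ^ (n - 3) * (rising_ratio k * harm_gap0 k) ^ 2)"
    using poly_fun_mult[OF poly_fun_power[OF poly_fun_rising_ratio]
        poly_fun_power[OF poly_fun_rising_ratio_harm_gap0], of "n - 3" 2]
    unfolding deg .
  from sum_signed_binom_poly_fun[OF this] show ?thesis by (simp only: eq)
qed

lemma harm_Zp_loc: "k < p \<Longrightarrow> harm k \<in> Zp_loc p"
  unfolding harm_def by (intro Zp_loc_sum Zp_loc_inverse_nat prime_p) auto

lemma harm_gap0_Zp_loc: "k \<le> m \<Longrightarrow> harm_gap0 k \<in> Zp_loc p"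
  unfolding harm_gap0_def using p_eq q_pos
  by (intro Zp_loc_diff Zp_loc_sum inverse_q_plus_Zp_loc harm_Zp_loc prime_p) auto

lemma shifted_harm2_Zp_loc: "k \<le> m \<Longrightarrow> shifted_harm2 k \<in> Zp_loc p"
  unfolding shifted_harm2_def power_one_over[symmetric]
  by (intro Zp_loc_sum Zp_loc_power inverse_q_plus_Zp_loc prime_p) auto

lemma inverse_square_reflect_cong:
  assumes "i < m"
  shows "rat_cong (1 / (of_nat q + of_nat i) ^ 2) (1 / of_nat (m - i) ^ 2) p 1"
proof -
  define x :: rat where "x = of_nat q + of_nat i"
  define y :: rat where "y = of_nat (m - i)"
  have "q + i + (m - i) = p" using assms p_eq by simp
  then have "x + y = of_nat p" unfolding x_def y_def by (metis of_nat_add)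
  moreover have "x ^ 2 - y ^ 2 = (x + y) * (x - y)" by (simp add: power2_eq_square algebra_simps)
  moreover have "x - y \<in> Zp_loc p" unfolding x_def y_def by (intro Zp_loc_diff Zp_loc_add Zp_loc_of_nat prime_p)
  ultimately have "rat_cong (x ^ 2) (y ^ 2) p 1" unfolding rat_cong_def by auto
  moreover have "1 / x ^ 2 \<in> Zp_loc p" "1 / y ^ 2 \<in> Zp_loc p"
    unfolding x_def y_def power_one_over[symmetric] using assms p_eq q_pos
    by (intro Zp_loc_power inverse_q_plus_Zp_loc Zp_loc_inverse_nat prime_p; simp)+
  moreover have "x \<noteq> 0" "y \<noteq> 0" unfolding x_def y_def using assms q_pos by simp_all
  ultimately show ?thesis using rat_cong_inverse[OF prime_p] unfolding x_def y_def by simp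
qed

lemma shifted_harm2_reflect_cong:
  assumes "k \<le> m"
  shows "rat_cong (shifted_harm2 (m - k)) (harm2 m - harm2 k) p 1"
proof -
  have "rat_cong (shifted_harm2 (m - k)) (\<Sum>i<m - k. 1 / of_nat (m - i) ^ 2) p 1"
    unfolding shifted_harm2_def using assms
    by (intro rat_cong_sum[OF prime_p] inverse_square_reflect_cong) auto
  moreover have "(\<Sum>i<m - k. 1 / of_nat (m - i) ^ 2) = harm2 m - harm2 k"
  proof -
    have "harm2 m = harm2 k + (\<Sum>i<m - k. 1 / (of_nat k + 1 + of_nat i) ^ 2)"
      using harm2_add[of k "m - k"] assms by simp
    also have "(\<Sum>i<m - k. 1 / (of_nat k + 1 + of_nat i :: rat) ^ 2)
        = (\<Sum>i<m - k. 1 / (of_nat k + 1 + of_nat (m - k - Suc i)) ^ 2)"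
      by (rule sum.nat_diff_reindex[symmetric])
    also have "\<dots> = (\<Sum>i<m - k. 1 / of_nat (m - i) ^ 2)"
    proof (rule sum.cong[OF refl])
      fix i assume "i \<in> {..<m - k}"
      then have "k + 1 + (m - k - Suc i) = m - i" using assms by auto
      then show "1 / (of_nat k + 1 + of_nat (m - k - Suc i)) ^ 2 = 1 / (of_nat (m - i) :: rat) ^ 2"
        by (metis of_nat_add of_nat_1)
    qed
    finally show ?thesis by simp
  qed
  ultimately show ?thesis by simp
qed

lemma shifted_harm2_reflect_sum_cong:
  assumes "k \<le> m"
  shows "rat_cong (shifted_harm2 k + shifted_harm2 (m - k))
    ((\<Sum>j<q - 1. 1 / (of_nat k + 1 + of_nat j) ^ 2) + (harm2 m - harm2 (q - 1))) p 1"
proof -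
  have "rat_cong (shifted_harm2 k + shifted_harm2 (m - k)) (shifted_harm2 k + (harm2 m - harm2 k)) p 1"
    by (rule rat_cong_add[OF prime_p rat_cong_refl[OF prime_p] shifted_harm2_reflect_cong[OF assms]])
  then show ?thesis unfolding shifted_harm2_eq by simp
qed

lemma sum_hyp_coeff_approx_reflect_zero:
  "(\<Sum>k=0..m. hyp_coeff_approx k * ((\<Sum>j<q - 1. 1 / (of_nat k + 1 + of_nat j) ^ 2) + K)) = 0"
proof -
  have split: "n - 1 = (n - 3) + 2" using n_gt_2 by simp
  then have deg: "(q - 1) * (n - 3) + (q - 1) * 2 = (q - 1) * (n - 1)" by (simp add: distrib_left)
  have eq: "hyp_coeff_approx k * ((\<Sum>j<q - 1. 1 / (of_nat k + 1 + of_nat j) ^ 2) + K)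
      = signed_binom k * (rising_ratio k ^ (n - 3) * (\<Sum>j<q - 1. (rising_ratio k / (of_nat k + 1 + of_nat j)) ^ 2)
          + rising_ratio k ^ (n - 1) * K)" for k
    unfolding hyp_coeff_approx_def split power_add
    by (simp add: sum_distrib_left power_divide algebra_simps)
  have "poly_fun ((q - 1) * 2) (\<lambda>k. \<Sum>j<q - 1. (rising_ratio k / (of_nat k + 1 + of_nat j)) ^ 2)"
    by (rule poly_fun_sum, rule poly_fun_power, rule poly_fun_rising_ratio_div) simp
  from poly_fun_mult[OF poly_fun_power[OF poly_fun_rising_ratio, of "n - 3"] this, unfolded deg]
  have "poly_fun ((q - 1) * (n - 1))
      (\<lambda>k. rising_ratio k ^ (n - 3) * (\<Sum>j<q - 1. (rising_ratio k / (of_nat k + 1 + of_nat j)) ^ 2)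
        + rising_ratio k ^ (n - 1) * K)"
    by (rule poly_fun_add[OF _ poly_fun_mult_const[OF poly_fun_power[OF poly_fun_rising_ratio]]])
  from sum_signed_binom_poly_fun[OF this] show ?thesis by (simp only: eq)
qed

lemma hyp_coeff_approx_cong_signed_binom_power:
  assumes "k \<le> m"
  shows "rat_cong (hyp_coeff_approx k) (signed_binom k ^ n) p 1"
proof -
  have "rat_cong (signed_binom k * rising_ratio k ^ (n - 1)) (signed_binom k * signed_binom k ^ (n - 1)) p 1"
    using rat_cong_power[OF prime_p rising_ratio_cong_signed_binom[OF assms] signed_binom_Zp_loc]
    by (intro rat_cong_mult[OF prime_p rat_cong_refl[OF prime_p]] signed_binom_Zp_loc Zp_loc_power prime_p)
  moreover have "signed_binom k * signed_binom k ^ (n - 1) = signed_binom k ^ n" using n_gt_2 by (simp add: power_eq_if)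
  ultimately show ?thesis unfolding hyp_coeff_approx_def by simp
qed

lemma sum_signed_binom_power_reflect:
  "(\<Sum>k=0..m. signed_binom k ^ n * f k) = (\<Sum>k=0..m. signed_binom k ^ n * f (m - k))"
proof -
  have "(\<Sum>k=0..m. signed_binom k ^ n * f k) = (\<Sum>k=0..m. signed_binom (m - k) ^ n * f (m - k))"
    using sum.atLeastAtMost_rev[of "\<lambda>k. signed_binom k ^ n * f k" 0 m] by simp
  also have "\<dots> = (\<Sum>k=0..m. signed_binom k ^ n * f (m - k))"
    unfolding signed_binom_def using signed_binomial_power_reflect[OF _ even_m_times_n] by (intro sum.cong) auto
  finally show ?thesis .
qed

lemma sum_hyp_coeff_approx_shifted_harm2_cong: "rat_cong (\<Sum>k=0..m. hyp_coeff_approx k * shifted_harm2 k) 0 p 1"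
proof -
  define R where "R k = (\<Sum>j<q - 1. 1 / (of_nat k + 1 + of_nat j) ^ 2) + (harm2 m - harm2 (q - 1))" for k
  have reflect: "rat_cong (shifted_harm2 k + shifted_harm2 (m - k)) (R k) p 1" if "k \<le> m" for k
    unfolding R_def using shifted_harm2_reflect_sum_cong[OF that] .
  have R_Zp_loc: "R k \<in> Zp_loc p" if "k \<le> m" for k
    using rat_cong_Zp_loc[OF prime_p rat_cong_sym[OF prime_p reflect[OF that]]] that
    by (simp add: Zp_loc_add shifted_harm2_Zp_loc prime_p)
  let ?W = "\<Sum>k=0..m. signed_binom k ^ n * shifted_harm2 k"
  have "rat_cong (of_nat 2 * (\<Sum>k=0..m. hyp_coeff_approx k * shifted_harm2 k)) (of_nat 2 * ?W) p 1"
    by (intro rat_cong_mult[OF prime_p rat_cong_refl[OF prime_p]] rat_cong_sum[OF prime_p]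
        rat_cong_mult[OF prime_p hyp_coeff_approx_cong_signed_binom_power rat_cong_refl[OF prime_p]]
        hyp_coeff_approx_Zp_loc shifted_harm2_Zp_loc Zp_loc_of_nat Zp_loc_sum Zp_loc_mult Zp_loc_power
        signed_binom_Zp_loc prime_p) auto
  also have "of_nat 2 * ?W = (\<Sum>k=0..m. signed_binom k ^ n * (shifted_harm2 k + shifted_harm2 (m - k)))"
    using sum_signed_binom_power_reflect[of shifted_harm2] by (simp add: distrib_left sum.distrib)
  also have "rat_cong (\<Sum>k=0..m. signed_binom k ^ n * (shifted_harm2 k + shifted_harm2 (m - k)))
      (\<Sum>k=0..m. signed_binom k ^ n * R k) p 1"
    by (intro rat_cong_sum[OF prime_p] rat_cong_mult[OF prime_p rat_cong_refl[OF prime_p] reflect]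
        Zp_loc_power signed_binom_Zp_loc R_Zp_loc prime_p) auto
  also have "rat_cong (\<Sum>k=0..m. signed_binom k ^ n * R k) (\<Sum>k=0..m. hyp_coeff_approx k * R k) p 1"
    by (intro rat_cong_sum[OF prime_p] rat_cong_mult[OF prime_p _ rat_cong_refl[OF prime_p]]
        rat_cong_sym[OF prime_p hyp_coeff_approx_cong_signed_binom_power]
        Zp_loc_power signed_binom_Zp_loc R_Zp_loc prime_p) auto
  also have "(\<Sum>k=0..m. hyp_coeff_approx k * R k) = 0"
    unfolding R_def by (rule sum_hyp_coeff_approx_reflect_zero)
  finally have "rat_cong (of_nat 2 * (\<Sum>k=0..m. hyp_coeff_approx k * shifted_harm2 k)) 0 p 1" .
  moreover have "\<not> p dvd 2" using n_gt_2 n_lt_p by (auto dest: dvd_imp_le)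
  ultimately show ?thesis by (rule rat_cong_cancel[OF prime_p])
qed

theorem sum_hyp_coeff_harm_gap_cong: "rat_cong (\<Sum>k=0..m. hyp_coeff k * harm_gap k) 0 p 2"
proof -
  have "rat_cong (\<Sum>k=0..m. hyp_coeff k * harm_gap k)
      (\<Sum>k=0..m. hyp_coeff_approx k * (harm_gap0 k + t * shifted_harm2 k)) p 2"
    by (intro rat_cong_sum[OF prime_p] rat_cong_mult[OF prime_p hyp_coeff_cong harm_gap_cong hyp_coeff_Zp_loc]
        Zp_loc_add Zp_loc_mult harm_gap0_Zp_loc t_Zp_loc shifted_harm2_Zp_loc prime_p) auto
  also have "(\<Sum>k=0..m. hyp_coeff_approx k * (harm_gap0 k + t * shifted_harm2 k))
      = t * (\<Sum>k=0..m. hyp_coeff_approx k * shifted_harm2 k)"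
    using sum_hyp_coeff_approx_harm_gap0 by (simp add: distrib_left sum.distrib sum_distrib_left mult_ac)
  also have "rat_cong (t * (\<Sum>k=0..m. hyp_coeff_approx k * shifted_harm2 k)) 0 p 2"
    using rat_cong_zero_mult[OF prime_p t_cong_0 sum_hyp_coeff_approx_shifted_harm2_cong] by (simp add: numeral_2_eq_2)
  finally show ?thesis .
qed

lemma harm_gap_cong_mod_p:
  assumes "k \<le> m"
  shows "rat_cong (harm_gap k) (harm_gap0 k) p 1"
proof -
  have "rat_cong (harm_gap k) (harm_gap0 k + t * shifted_harm2 k) p 1"
    by (rule rat_cong_mono[OF prime_p harm_gap_cong[OF assms]]) simp
  also have "rat_cong (harm_gap0 k + t * shifted_harm2 k) (harm_gap0 k + 0) p 1"
    using rat_cong_mult_Zp_loc[OF prime_p t_cong_0 shifted_harm2_Zp_loc[OF assms]]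
    by (intro rat_cong_add[OF prime_p rat_cong_refl[OF prime_p]])
  finally show ?thesis by simp
qed

theorem sum_hyp_coeff_harm_gap_sq_cong: "rat_cong (\<Sum>k=0..m. hyp_coeff k * harm_gap k ^ 2) 0 p 1"
proof -
  have "rat_cong (\<Sum>k=0..m. hyp_coeff k * harm_gap k ^ 2) (\<Sum>k=0..m. hyp_coeff_approx k * harm_gap0 k ^ 2) p 1"
    by (intro rat_cong_sum[OF prime_p] rat_cong_mult[OF prime_p rat_cong_mono[OF prime_p hyp_coeff_cong]]
        rat_cong_power[OF prime_p harm_gap_cong_mod_p harm_gap0_Zp_loc]
        hyp_coeff_Zp_loc Zp_loc_power harm_gap0_Zp_loc prime_p) auto
  then show ?thesis unfolding sum_hyp_coeff_approx_harm_gap0_sq .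
qed

end

theorem lemma3p2:
  fixes n q p :: nat
  assumes "n > 2" and "q > 0" and "even n \<or> odd q"
    and "prime p" and "p > max n ((q - 1) * n + 1)"
  shows "rat_cong (\<Sum>k=0..p-q. (pochhammer (of_nat q - of_nat p / of_nat n) k) ^ n / (pochhammer 1 k) ^ n *
            ((\<Sum>i<k. 1 / (of_nat q + of_nat i - of_nat p / of_nat n)) - harm k)) 0 p 2
       \<and> rat_cong (\<Sum>k=0..p-q. (pochhammer (of_nat q - of_nat p / of_nat n) k) ^ n / (pochhammer 1 k) ^ n *
            ((\<Sum>i<k. 1 / (of_nat q + of_nat i - of_nat p / of_nat n)) - harm k) ^ 2) 0 p 1"
proof -
  interpret hypergeometric_congruence n q p
    using assms by unfold_locales
  show ?thesis
    using sum_hyp_coeff_harm_gap_cong sum_hyp_coeff_harm_gap_sq_cong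
    unfolding hyp_coeff_def harm_gap_def m_def ..
qed

end
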